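(* In the setting of the context, write $A_1=\mathrm{SYM}$, $A_2=\mathrm{SR}$, $A_3=\mathrm{SUPP}$, $A_4=\mathrm{LF}$, $A_5=\mathrm{M}$, and $U_1=U_3=U_4=\Lambda_1=\Lambda_3=\Lambda_4=\mathbb{C}^N$. Suppose: (a) $U_2$ is a neighborhood of a point $x_2\in A_2$ such that $P_{A_2}$ is pointwise $\alpha$-firmly nonexpansive with $\alpha=1/2$ on $U_2$ at each point of $\Lambda_2:=P_{A_2}^{-1}(A_2\cap U_2)\cap U_2$; and $U_5$ is a neighborhood of a point $x_5\in A_5$ such that $A_5$ is $\epsilon$-super-regular at a distance at $x_5$ relative to $\Lambda_5:=P_{A_5}^{-1}(A_5\cap U_5)\cap U_5$ with constant $\epsilon_{U_5}$ on $U_5$. Then: (i) if moreover $\epsilon_{U_5}\in[0,4\sqrt2/7-5/7)$, then for $j=1,\dots,5$ the reflector $R_{A_j}$ is pointwise almost nonexpansive with violation $\tilde\epsilon_j$ at each point of $\Lambda_j$ on $U_j$, where $\tilde\epsilon_1=\tilde\epsilon_2=\tilde\epsilon_3=\tilde\epsilon_4=0$ and $\tilde\epsilon_5=8\epsilon_{U_5}(1+\epsilon_{U_5})/(1-\epsilon_{U_5})^2$; (ii) if moreover $\epsilon_{U_5}\in[0,2\sqrt3/3-1)$, then for $j=1,\dots,5$ the projector $P_{A_j}$ is pointwise almost $\alpha$-firmly nonexpansive with constant $\alpha_j=1/2$ and violation $\check\epsilon_j$ at each point of $\Lambda_j$ on $U_j$, where $\check\epsilon_1=\check\epsilon_2=\check\epsilon_3=\check\epsilon_4=0$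 and $\check\epsilon_5=4\epsilon_{U_5}(1+\epsilon_{U_5})/(1-\epsilon_{U_5})^2$.
   Context: Let $N=N_xN_yN_z$; vectors $u\in\mathbb{C}^N$ are arrays indexed by $\mathbb I=\{1,\dots,N_x\}\times\{1,\dots,N_y\}\times\{1,\dots,N_z\}$; $\mathbb{C}^N\cong\mathbb{R}^{2N}$ carries the real inner product $\langle x,y\rangle=\mathrm{Re}\sum_k\overline{x_k}y_k$ and Euclidean norm. Let $\mathcal F:\mathbb{C}^N\to\mathbb{C}^{\widehat N}$ be the discrete Fourier transform, $\widehat u=\mathcal Fu$, entries indexed by $\widehat{\mathbb I}$ with grid points $(\hat x_i,\hat y_j,\hat z_l)\in\mathbb{R}^3$. Given: $\mathbb S\subset\widehat{\mathbb I}$, data $b_{(i,j,l)}\ge0$ for $(i,j,l)\in\mathbb S$, a ball $B_{\bar r}\subset\mathbb{R}^3$, a symmetric binary mask $\omega\in\{0,1\}^N$, an integer $s>0$. Sets: $\mathrm{M}=\{u: |\widehat u_{(i,j,l)}|=b_{(i,j,l)}\ \forall (i,j,l)\in\mathbb S\}$; $\mathrm{LF}=\{u: \widehat u_{(i,j,l)}=0 \text{ whenever } (\hat x_i,\hat y_j,\hat z_l)\notin B_{\bar r}\}$; $\mathrm{SUPP}=\{u:\omega_{(i,j,l)}u_{(i,j,l)}=u_{(i,j,l)}\ \forall(i,j,l)\}$; $\mathrm{SR}=\{u:\|u\|_0\le s,\ \mathrm{Im}(u)=0\}$ ($\|u\|_0$ = number of nonzero entries); $\mathrm{SYM}=\{u: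 u_{(i,j,l)}=u_{(N_x-i+1,j,l)}=-u_{(i,N_y-j+1,l)}=-u_{(i,j,N_z-l+1)}\ \forall(i,j,l)\}$. For closed nonempty $A$: $P_Ax=\operatorname{argmin}_{a\in A}\|a-x\|$ (possibly set-valued), $R_A=2P_A-\mathrm{Id}$, and $P_A^{-1}(S)=\{x: P_Ax\cap S\neq\emptyset\}$. Proximal normal cone: $N^P_A(a)=\mathrm{cone}(P_A^{-1}(a)-a)$ for $a\in A$. $\epsilon$-super-regularity at a distance: a set $\Omega$ is $\epsilon$-super-regular at a distance relative to $\Lambda$ at $\bar x$ with constant $\epsilon_U$ on the open set $U\ni\bar x$ if $\langle v-(y'-y),\,y-x\rangle\le\epsilon_U\|v-(y'-y)\|\,\|y-x\|$ for all $y'\in U\cap\Lambda$, all $y\in P_\Omega(y')$, and all $(x,v)$ with $v\in N^P_\Omega(x)$, $x+v\in U$, $x\in P_\Omega(x+v)$. A map $T$ is pointwise almost nonexpansive at $y$ on $U$ with violation $\epsilon\in[0,1)$ if $\|x^+-y^+\|\le\sqrt{1+\epsilon}\|x-y\|$ for all $x\in U$, $x^+\in Tx$, $y^+\in Ty$; pointwise almost $\alpha$-firmly nonexpansive ($\alpha\in(0,1)$) at $y$ on $U$ with violation $\epsilon\in[0,1)$ if $\|x^+-y^+\|^2\le(1+\epsilon)\|x-y\|^2-\frac{1-\alpha}{\alpha}\|(x^+-x)-(y^+-y)\|^2$ for all such $x,x^+,y^+$; "$\alpha$-firmly nonexpansive" means violation $0$. *)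

theory Defs
  imports "HOL-Analysis.Analysis"
begin

type_synonym idx = "nat \<times> nat \<times> nat"
type_synonym cvec = "idx \<Rightarrow> complex"

definition Idx :: "nat \<Rightarrow> nat \<Rightarrow> nat \<Rightarrow> idx set" where
  "Idx a b c = {1..a} \<times> {1..b} \<times> {1..c}"

text \<open>The space C^N: arrays indexed by I (zero outside I).\<close>
definition Vsp :: "idx set \<Rightarrow> cvec set" where
  "Vsp I = {u. \<forall>k. k \<notin> I \<longrightarrow> u k = 0}"

definition vadd :: "cvec \<Rightarrow> cvec \<Rightarrow> cvec" where "vadd x y = (\<lambda>k. x k + y k)"
definition vsub :: "cvec \<Rightarrow> cvec \<Rightarrow> cvec" where "vsub x y = (\<lambda>k. x k - y k)"
definition vscale :: "real \<Rightarrow> cvec \<Rightarrow> cvec" where "vscale t x = (\<lambda>k. complex_of_real t * x k)"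

text \<open>Real inner product and Euclidean norm on C^N = R^(2N).\<close>
definition vinner :: "idx set \<Rightarrow> cvec \<Rightarrow> cvec \<Rightarrow> real" where
  "vinner I x y = Re (\<Sum>k\<in>I. cnj (x k) * y k)"
definition vnorm :: "idx set \<Rightarrow> cvec \<Rightarrow> real" where
  "vnorm I x = sqrt (\<Sum>k\<in>I. (cmod (x k))^2)"

definition proj :: "idx set \<Rightarrow> cvec set \<Rightarrow> cvec \<Rightarrow> cvec set" where
  "proj I A x = {a \<in> A. \<forall>b\<in>A. vnorm I (vsub a x) \<le> vnorm I (vsub b x)}"
definition reflector :: "idx set \<Rightarrow> cvec set \<Rightarrow> cvec \<Rightarrow> cvec set" where
  "reflector I A x = {vsub (vscale 2 a) x | a. a \<in> proj I A x}"
definition proj_inv :: "idx set \<Rightarrow> cvec set \<Rightarrow> cvec set \<Rightarrow> cvec set" where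
  "proj_inv I A S = {x \<in> Vsp I. proj I A x \<inter> S \<noteq> {}}"
definition prox_normal :: "idx set \<Rightarrow> cvec set \<Rightarrow> cvec \<Rightarrow> cvec set" where
  "prox_normal I A a = {vscale t (vsub y a) | t y. 0 \<le> t \<and> y \<in> proj_inv I A {a}}"

definition open_V :: "idx set \<Rightarrow> cvec set \<Rightarrow> bool" where
  "open_V I U \<longleftrightarrow> U \<subseteq> Vsp I \<and>
     (\<forall>x\<in>U. \<exists>e>0. \<forall>y\<in>Vsp I. vnorm I (vsub y x) < e \<longrightarrow> y \<in> U)"

definition super_regular_dist ::
  "idx set \<Rightarrow> cvec set \<Rightarrow> cvec set \<Rightarrow> cvec \<Rightarrow> real \<Rightarrow> cvec set \<Rightarrow> bool" where
  "super_regular_dist I Om Lam xbar eps U \<longleftrightarrow> open_V I U \<and> xbar \<in> U \<and>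
     (\<forall>y'\<in>U \<inter> Lam. \<forall>y\<in>proj I Om y'. \<forall>x v.
        x \<in> Vsp I \<and> v \<in> prox_normal I Om x \<and> vadd x v \<in> U \<and> x \<in> proj I Om (vadd x v) \<longrightarrow>
        vinner I (vsub v (vsub y' y)) (vsub y x)
          \<le> eps * vnorm I (vsub v (vsub y' y)) * vnorm I (vsub y x))"

definition pw_almost_nonexp ::
  "idx set \<Rightarrow> (cvec \<Rightarrow> cvec set) \<Rightarrow> cvec \<Rightarrow> cvec set \<Rightarrow> real \<Rightarrow> bool" where
  "pw_almost_nonexp I T y U eps \<longleftrightarrow> 0 \<le> eps \<and> eps < 1 \<and>
     (\<forall>x\<in>U. \<forall>xp\<in>T x. \<forall>yp\<in>T y.
        vnorm I (vsub xp yp) \<le> sqrt (1 + eps) * vnorm I (vsub x y))"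

definition pw_almost_afne ::
  "idx set \<Rightarrow> (cvec \<Rightarrow> cvec set) \<Rightarrow> cvec \<Rightarrow> cvec set \<Rightarrow> real \<Rightarrow> real \<Rightarrow> bool" where
  "pw_almost_afne I T y U alpha eps \<longleftrightarrow> 0 < alpha \<and> alpha < 1 \<and> 0 \<le> eps \<and> eps < 1 \<and>
     (\<forall>x\<in>U. \<forall>xp\<in>T x. \<forall>yp\<in>T y.
        (vnorm I (vsub xp yp))^2 \<le> (1 + eps) * (vnorm I (vsub x y))^2
          - (1 - alpha) / alpha * (vnorm I (vsub (vsub xp x) (vsub yp y)))^2)"

definition dft :: "nat \<Rightarrow> nat \<Rightarrow> nat \<Rightarrow> nat \<Rightarrow> nat \<Rightarrow> nat \<Rightarrow> cvec \<Rightarrow> cvec" where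
  "dft Nx Ny Nz Mx My Mz u = (\<lambda>(k1, k2, k3).
     if (k1, k2, k3) \<in> Idx Mx My Mz then
       (\<Sum>(i, j, l)\<in>Idx Nx Ny Nz. u (i, j, l) *
          cis (- 2 * pi * (real (i - 1) * real (k1 - 1) / real Mx
                         + real (j - 1) * real (k2 - 1) / real My
                         + real (l - 1) * real (k3 - 1) / real Mz)))
     else 0)"

definition setM :: "idx set \<Rightarrow> (cvec \<Rightarrow> cvec) \<Rightarrow> idx set \<Rightarrow> (idx \<Rightarrow> real) \<Rightarrow> cvec set" where
  "setM I F S b = {u \<in> Vsp I. \<forall>k\<in>S. cmod (F u k) = b k}"

definition setLF :: "idx set \<Rightarrow> (cvec \<Rightarrow> cvec) \<Rightarrow> idx set \<Rightarrow> (idx \<Rightarrow> real^3)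
     \<Rightarrow> (real^3) set \<Rightarrow> cvec set" where
  "setLF I F Ihat gp B = {u \<in> Vsp I. \<forall>k\<in>Ihat. gp k \<notin> B \<longrightarrow> F u k = 0}"

definition setSUPP :: "idx set \<Rightarrow> (idx \<Rightarrow> real) \<Rightarrow> cvec set" where
  "setSUPP I \<omega> = {u \<in> Vsp I. \<forall>k\<in>I. complex_of_real (\<omega> k) * u k = u k}"

definition setSR :: "idx set \<Rightarrow> nat \<Rightarrow> cvec set" where
  "setSR I s = {u \<in> Vsp I. card {k \<in> I. u k \<noteq> 0} \<le> s \<and> (\<forall>k\<in>I. Im (u k) = 0)}"

definition setSYM :: "nat \<Rightarrow> nat \<Rightarrow> nat \<Rightarrow> cvec set" where
  "setSYM Nx Ny Nz = {u \<in> Vsp (Idx Nx Ny Nz). \<forall>i j l. (i, j, l) \<in> Idx Nx Ny Nz \<longrightarrow>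
      u (i, j, l) = u (Nx - i + 1, j, l) \<and>
      u (i, j, l) = - u (i, Ny - j + 1, l) \<and>
      u (i, j, l) = - u (i, j, Nz - l + 1)}"

end

theory Submission
  imports Defs
begin

text \<open>
  SYM, SUPP and LF are real linear subspaces (the DFT is linear), so their projectors are
  orthogonal projections and hence firmly nonexpansive; for SR this is assumed. For M,
  super-regularity at a distance, applied at the projections a of x and b of y, gives
  \<open><p, q> \<le> \<epsilon> |p| |q|\<close> for \<open>p = a - b\<close> and \<open>q = (a - x) - (b - y)\<close>. As \<open>x - y = p - q\<close>,
  this yields \<open>(1 - \<epsilon>) (|p|\<^sup>2 + |q|\<^sup>2) \<le> |x - y|\<^sup>2\<close>, i.e. almost firm nonexpansiveness with any
  violation \<open>c \<ge> \<epsilon> / (1 - \<epsilon>)\<close>, in particular the paper's \<open>4\<epsilon>(1 + \<epsilon>) / (1 - \<epsilon>)\<^sup>2\<close>.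
  Finally \<open>R x - R y = p + q\<close>, so the parallelogram law turns violation c for the projector
  into violation 2c for the reflector.
\<close>

lemma vinner_Re_Im: "vinner I x y = (\<Sum>k\<in>I. Re (x k) * Re (y k) + Im (x k) * Im (y k))"
  unfolding vinner_def by (simp add: Re_sum)

lemma power2_vnorm: "(vnorm I x)^2 = vinner I x x"
proof -
  have "0 \<le> (\<Sum>k\<in>I. (cmod (x k))^2)" by (simp add: sum_nonneg)
  then show ?thesis unfolding vnorm_def vinner_Re_Im cmod_power2
    by (simp add: power2_eq_square)
qed

lemma vnorm_nonneg: "0 \<le> vnorm I x"
  unfolding vnorm_def by (simp add: sum_nonneg)

lemma vinner_commute: "vinner I x y = vinner I y x"
  unfolding vinner_Re_Im by (simp add: algebra_simps)

lemma vnorm_vsub_commute: "vnorm I (vsub x y) = vnorm I (vsub y x)"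
  unfolding vnorm_def vsub_def by (simp add: norm_minus_commute)

lemma vinner_vsub_commute: "vinner I (vsub x y) (vsub z w) = vinner I (vsub y x) (vsub w z)"
  unfolding vinner_def vsub_def by (simp add: algebra_simps)

lemma vinner_lincomb_left:
  assumes "\<forall>k\<in>I. f k = complex_of_real s * p k + complex_of_real t * q k"
  shows "vinner I f g = s * vinner I p g + t * vinner I q g"
proof -
  have "vinner I f g = (\<Sum>k\<in>I. s * (Re (p k) * Re (g k) + Im (p k) * Im (g k))
          + t * (Re (q k) * Re (g k) + Im (q k) * Im (g k)))"
    unfolding vinner_Re_Im using assms by (intro sum.cong) (auto simp: algebra_simps)
  also have "\<dots> = s * vinner I p g + t * vinner I q g"
    unfolding vinner_Re_Im by (simp add: sum.distrib sum_distrib_left distrib_left)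
  finally show ?thesis .
qed

lemma power2_vnorm_lincomb:
  assumes "\<forall>k\<in>I. f k = complex_of_real s * p k + complex_of_real t * q k"
  shows "(vnorm I f)^2 = s^2 * (vnorm I p)^2 + 2 * s * t * vinner I p q + t^2 * (vnorm I q)^2"
proof -
  have "(vnorm I f)^2 = s * vinner I p f + t * vinner I q f"
    unfolding power2_vnorm using vinner_lincomb_left[OF assms] .
  also have "vinner I p f = s * vinner I p p + t * vinner I p q"
    using vinner_lincomb_left[OF assms, of p] vinner_commute by metis
  also have "vinner I q f = s * vinner I q p + t * vinner I q q"
    using vinner_lincomb_left[OF assms, of q] vinner_commute by metis
  finally show ?thesis unfolding power2_vnorm using vinner_commute[of I p q]
    by (simp add: algebra_simps power2_eq_square)
qed

lemma reflector_almost_nonexp_if_proj_almost_firmly_nonexp: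
  assumes firm: "pw_almost_afne I (proj I A) y U (1/2) eps" and eps: "2 * eps < 1"
  shows "pw_almost_nonexp I (reflector I A) y U (2 * eps)"
  unfolding pw_almost_nonexp_def
proof (intro conjI ballI)
  have eps_nonneg: "0 \<le> eps" using firm unfolding pw_almost_afne_def by simp
  then show "0 \<le> 2 * eps" by simp
  show "2 * eps < 1" by (fact eps)
  fix x xr yr assume x: "x \<in> U" and xr: "xr \<in> reflector I A x" and yr: "yr \<in> reflector I A y"
  obtain a where a: "a \<in> proj I A x" and xr_eq: "xr = vsub (vscale 2 a) x"
    using xr unfolding reflector_def by blast
  obtain b where b: "b \<in> proj I A y" and yr_eq: "yr = vsub (vscale 2 b) y"
    using yr unfolding reflector_def by blast
  define p where "p = vsub a b"
  define q where "q = vsub (vsub a x) (vsub b y)"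
  have firm_pq: "(vnorm I p)^2 + (vnorm I q)^2 \<le> (1 + eps) * (vnorm I (vsub x y))^2"
    using firm x a b unfolding pw_almost_afne_def p_def q_def by fastforce
  have "(vnorm I (vsub x y))^2 = (vnorm I p)^2 - 2 * vinner I p q + (vnorm I q)^2"
    using power2_vnorm_lincomb[of I "vsub x y" 1 p "-1" q]
    by (simp add: p_def q_def vsub_def)
  moreover have "(vnorm I (vsub xr yr))^2 = (vnorm I p)^2 + 2 * vinner I p q + (vnorm I q)^2"
    using power2_vnorm_lincomb[of I "vsub xr yr" 1 p 1 q]
    by (simp add: xr_eq yr_eq p_def q_def vsub_def vscale_def)
  ultimately have "(vnorm I (vsub xr yr))^2
      = 2 * ((vnorm I p)^2 + (vnorm I q)^2) - (vnorm I (vsub x y))^2"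
    by simp
  also have "\<dots> \<le> (1 + 2 * eps) * (vnorm I (vsub x y))^2"
    using firm_pq by (simp add: algebra_simps)
  also have "\<dots> = (sqrt (1 + 2 * eps) * vnorm I (vsub x y))^2"
    using eps_nonneg by (simp add: power_mult_distrib)
  finally have "(vnorm I (vsub xr yr))^2 \<le> (sqrt (1 + 2 * eps) * vnorm I (vsub x y))^2" .
  then show "vnorm I (vsub xr yr) \<le> sqrt (1 + 2 * eps) * vnorm I (vsub x y)"
    by (rule power2_le_imp_le) (simp add: eps_nonneg vnorm_nonneg)
qed

definition lincomb_closed :: "cvec set \<Rightarrow> bool" where
  "lincomb_closed A \<longleftrightarrow> (\<forall>u\<in>A. \<forall>z\<in>A. \<forall>t::real. (\<lambda>k. u k + complex_of_real t * z k) \<in> A)"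

lemma linear_coeff_zero_if_quadratic_nonneg:
  fixes c n :: real
  assumes n: "0 \<le> n" and nonneg: "\<forall>t. 0 \<le> 2 * t * c + t^2 * n"
  shows "c = 0"
proof -
  define t where "t = - c / (n + 1)"
  have t: "(n + 1) * t = - c" unfolding t_def using n by simp
  have "0 \<le> (n + 1)^2 * (2 * t * c + t^2 * n)" using nonneg by simp
  also have "\<dots> = 2 * c * (n + 1) * ((n + 1) * t) + ((n + 1) * t)^2 * n"
    by (simp add: power2_eq_square algebra_simps)
  also have "\<dots> = - (c^2 * (n + 2))"
    unfolding t by (simp add: power2_eq_square algebra_simps)
  finally have "c^2 * (n + 2) \<le> 0" by simp
  then show ?thesis using n by (simp add: mult_le_0_iff)
qed

lemma proj_lincomb_closed_orthogonal:
  assumes A: "lincomb_closed A" and a: "a \<in> proj I A x" and z: "z \<in> A"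
  shows "vinner I (vsub a x) z = 0"
proof (rule linear_coeff_zero_if_quadratic_nonneg)
  show "0 \<le> (vnorm I z)^2" by simp
  show "\<forall>t. 0 \<le> 2 * t * vinner I (vsub a x) z + t^2 * (vnorm I z)^2"
  proof
    fix t :: real
    define a' where "a' = (\<lambda>k. a k + complex_of_real t * z k)"
    have "a' \<in> A" using A a z unfolding lincomb_closed_def proj_def a'_def by blast
    then have "vnorm I (vsub a x) \<le> vnorm I (vsub a' x)"
      using a unfolding proj_def by blast
    then have "(vnorm I (vsub a x))^2 \<le> (vnorm I (vsub a' x))^2"
      by (simp add: vnorm_nonneg power_mono)
    also have "\<dots> = (vnorm I (vsub a x))^2 + 2 * t * vinner I (vsub a x) z + t^2 * (vnorm I z)^2"
      using power2_vnorm_lincomb[of I "vsub a' x" 1 "vsub a x" t z]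
      by (simp add: a'_def vsub_def algebra_simps)
    finally show "0 \<le> 2 * t * vinner I (vsub a x) z + t^2 * (vnorm I z)^2" by simp
  qed
qed

lemma proj_lincomb_closed_firmly_nonexp:
  assumes A: "lincomb_closed A"
  shows "pw_almost_afne I (proj I A) y U (1/2) 0"
  unfolding pw_almost_afne_def
proof (intro conjI ballI)
  fix x a b assume a: "a \<in> proj I A x" and b: "b \<in> proj I A y"
  define p where "p = vsub a b"
  define q where "q = vsub (vsub a x) (vsub b y)"
  have "(\<lambda>k. a k + complex_of_real (-1) * b k) \<in> A"
    using A a b unfolding lincomb_closed_def proj_def by blast
  then have pA: "p \<in> A" by (simp add: p_def vsub_def)
  have "vinner I q p = 1 * vinner I (vsub a x) p + (-1) * vinner I (vsub b y) p"
    by (rule vinner_lincomb_left) (simp add: q_def vsub_def)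
  then have "vinner I p q = 0"
    using proj_lincomb_closed_orthogonal[OF A a pA] proj_lincomb_closed_orthogonal[OF A b pA]
    by (simp add: vinner_commute)
  moreover have "(vnorm I (vsub x y))^2 = (vnorm I p)^2 - 2 * vinner I p q + (vnorm I q)^2"
    using power2_vnorm_lincomb[of I "vsub x y" 1 p "-1" q]
    by (simp add: p_def q_def vsub_def)
  ultimately show "(vnorm I (vsub a b))^2 \<le> (1 + 0) * (vnorm I (vsub x y))^2
          - (1 - 1/2) / (1/2) * (vnorm I (vsub (vsub a x) (vsub b y)))^2"
    by (simp add: p_def q_def)
qed simp_all

lemma setSYM_reflect:
  assumes "u \<in> setSYM Nx Ny Nz" "(i, j, l) \<in> Idx Nx Ny Nz"
  shows "u (Nx - i + 1, j, l) = u (i, j, l)" "u (i, Ny - j + 1, l) = - u (i, j, l)"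
    "u (i, j, Nz - l + 1) = - u (i, j, l)"
proof -
  have h: "u (i, j, l) = u (Nx - i + 1, j, l)" "u (i, j, l) = - u (i, Ny - j + 1, l)"
    "u (i, j, l) = - u (i, j, Nz - l + 1)"
    using assms unfolding setSYM_def by blast+
  show "u (Nx - i + 1, j, l) = u (i, j, l)" using h(1) by (rule sym)
  show "u (i, Ny - j + 1, l) = - u (i, j, l)" by (subst equation_minus_iff) (fact h(2))
  show "u (i, j, Nz - l + 1) = - u (i, j, l)" by (subst equation_minus_iff) (fact h(3))
qed

lemma lincomb_closed_setSYM: "lincomb_closed (setSYM Nx Ny Nz)"
  unfolding lincomb_closed_def
proof (intro ballI allI)
  fix u z :: cvec and t :: real
  assume u: "u \<in> setSYM Nx Ny Nz" and z: "z \<in> setSYM Nx Ny Nz"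
  have "u \<in> Vsp (Idx Nx Ny Nz)" "z \<in> Vsp (Idx Nx Ny Nz)"
    using u z unfolding setSYM_def by blast+
  then have "(\<lambda>k. u k + complex_of_real t * z k) \<in> Vsp (Idx Nx Ny Nz)"
    unfolding Vsp_def by simp
  moreover have "u (Nx - i + 1, j, l) + complex_of_real t * z (Nx - i + 1, j, l)
        = u (i, j, l) + complex_of_real t * z (i, j, l)"
      "u (i, Ny - j + 1, l) + complex_of_real t * z (i, Ny - j + 1, l)
        = - (u (i, j, l) + complex_of_real t * z (i, j, l))"
      "u (i, j, Nz - l + 1) + complex_of_real t * z (i, j, Nz - l + 1)
        = - (u (i, j, l) + complex_of_real t * z (i, j, l))"
    if "(i, j, l) \<in> Idx Nx Ny Nz" for i j l
    by (simp_all only: setSYM_reflect[OF u that] setSYM_reflect[OF z that]) simp_all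
  ultimately show "(\<lambda>k. u k + complex_of_real t * z k) \<in> setSYM Nx Ny Nz"
    unfolding setSYM_def by simp
qed

lemma lincomb_closed_setSUPP: "lincomb_closed (setSUPP I \<omega>)"
  unfolding lincomb_closed_def setSUPP_def Vsp_def
  by (auto simp: distrib_left mult.left_commute) (metis add.right_neutral mult_zero_right)

lemma dft_lincomb:
  "dft Nx Ny Nz Mx My Mz (\<lambda>k. u k + complex_of_real t * z k) k
     = dft Nx Ny Nz Mx My Mz u k + complex_of_real t * dft Nx Ny Nz Mx My Mz z k"
  by (cases k) (simp add: dft_def split_def sum.distrib sum_distrib_left algebra_simps)

lemma lincomb_closed_setLF: "lincomb_closed (setLF I (dft Nx Ny Nz Mx My Mz) Ihat gp B)"
  unfolding lincomb_closed_def setLF_def Vsp_def by (auto simp: dft_lincomb)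

lemma super_regular_dist_proj_inner_le:
  assumes sr: "super_regular_dist I A Lam xbar e U" and A: "A \<subseteq> Vsp I"
    and y: "y \<in> U" "y \<in> Lam" and x: "x \<in> U"
    and a: "a \<in> proj I A x" and b: "b \<in> proj I A y"
  shows "vinner I (vsub a b) (vsub (vsub a x) (vsub b y))
           \<le> e * vnorm I (vsub a b) * vnorm I (vsub (vsub a x) (vsub b y))"
proof -
  have "x \<in> Vsp I" using x sr unfolding super_regular_dist_def open_V_def by blast
  then have "x \<in> proj_inv I A {a}" using a unfolding proj_inv_def by blast
  then have "vscale 1 (vsub x a) \<in> prox_normal I A a" unfolding prox_normal_def by force
  then have normal: "vsub x a \<in> prox_normal I A a" by (simp add: vscale_def)
  have x_eq: "vadd a (vsub x a) = x" by (simp add: vadd_def vsub_def)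
  have "a \<in> Vsp I" using a A unfolding proj_def by blast
  then have "a \<in> Vsp I \<and> vsub x a \<in> prox_normal I A a \<and> vadd a (vsub x a) \<in> U
      \<and> a \<in> proj I A (vadd a (vsub x a))"
    using normal x a by (simp add: x_eq)
  moreover have "y \<in> U \<inter> Lam" using y by blast
  ultimately have "vinner I (vsub (vsub x a) (vsub y b)) (vsub b a)
      \<le> e * vnorm I (vsub (vsub x a) (vsub y b)) * vnorm I (vsub b a)"
    using sr b unfolding super_regular_dist_def by blast
  moreover have "vsub (vsub x a) (vsub y b) = vsub (vsub b y) (vsub a x)"
    by (simp add: vsub_def fun_eq_iff)
  ultimately show ?thesis
    using vinner_vsub_commute[of I "vsub b y" "vsub a x" b a]
      vinner_commute[of I "vsub a b"] vnorm_vsub_commute[of I b a]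
      vnorm_vsub_commute[of I "vsub b y" "vsub a x"]
    by (simp add: mult_ac)
qed

lemma super_regular_dist_proj_almost_firmly_nonexp:
  assumes sr: "super_regular_dist I A Lam xbar e U" and A: "A \<subseteq> Vsp I"
    and y: "y \<in> U" "y \<in> Lam" and e: "0 \<le> e" "e < 1"
    and c: "c < 1" "e \<le> c * (1 - e)"
  shows "pw_almost_afne I (proj I A) y U (1/2) c"
  unfolding pw_almost_afne_def
proof (intro conjI ballI)
  have "0 \<le> c * (1 - e)" using e c by linarith
  then show c_nonneg: "0 \<le> c" using e by (simp add: zero_le_mult_iff)
  fix x a b assume x: "x \<in> U" and a: "a \<in> proj I A x" and b: "b \<in> proj I A y"
  define p where "p = vsub a b"
  define q where "q = vsub (vsub a x) (vsub b y)"
  define K where "K = (vnorm I (vsub x y))^2"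
  have inner: "vinner I p q \<le> e * vnorm I p * vnorm I q"
    unfolding p_def q_def by (rule super_regular_dist_proj_inner_le[OF sr A y x a b])
  have K: "K = (vnorm I p)^2 - 2 * vinner I p q + (vnorm I q)^2"
    using power2_vnorm_lincomb[of I "vsub x y" 1 p "-1" q]
    by (simp add: K_def p_def q_def vsub_def)
  have "0 \<le> (vnorm I p - vnorm I q)^2" by simp
  then have "2 * (vnorm I p * vnorm I q) \<le> (vnorm I p)^2 + (vnorm I q)^2"
    by (simp add: power2_diff)
  from mult_left_mono[OF this e(1)]
  have "(1 - e) * ((vnorm I p)^2 + (vnorm I q)^2) \<le> K"
    using inner K by (simp add: algebra_simps)
  then have "(1 + c) * ((1 - e) * ((vnorm I p)^2 + (vnorm I q)^2)) \<le> (1 + c) * K"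
    using c_nonneg by (simp add: mult_left_mono)
  moreover have "(vnorm I p)^2 + (vnorm I q)^2
      \<le> (1 + c) * ((1 - e) * ((vnorm I p)^2 + (vnorm I q)^2))"
    using mult_right_mono[OF c(2), of "(vnorm I p)^2 + (vnorm I q)^2"]
    by (simp add: algebra_simps)
  ultimately show "(vnorm I (vsub a b))^2 \<le> (1 + c) * (vnorm I (vsub x y))^2
          - (1 - 1/2) / (1/2) * (vnorm I (vsub (vsub a x) (vsub b y)))^2"
    by (simp add: p_def q_def K_def)
qed (use c in simp_all)

definition sr_violation :: "real \<Rightarrow> real" where
  "sr_violation e = 4 * e * (1 + e) / (1 - e)^2"

lemma sr_violation_ge:
  fixes e :: real assumes "0 \<le> e" "e < 1"
  shows "e \<le> sr_violation e * (1 - e)"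
proof -
  have "e * (1 - e) \<le> 4 * e * (1 + e)" using assms by (simp add: algebra_simps mult_left_mono)
  then have "e \<le> 4 * e * (1 + e) / (1 - e)" using assms by (simp add: le_divide_eq)
  then show ?thesis using assms by (simp add: sr_violation_def power2_eq_square)
qed

lemma sr_violation_lt_1:
  fixes e :: real assumes e: "0 \<le> e" "e < 2 * sqrt 3 / 3 - 1"
  shows "e < 1" "sr_violation e < 1"
proof -
  have "sqrt 3 < 3" by (simp add: real_sqrt_less_iff[of 3 9, simplified])
  then show e1: "e < 1" using e by simp
  have "(3 * (e + 1))^2 < (2 * sqrt 3)^2" using e by (intro power_strict_mono) simp_all
  then have "4 * e * (1 + e) < (1 - e)^2" by (simp add: power2_eq_square algebra_simps)
  then show "sr_violation e < 1" using e1 by (simp add: sr_violation_def)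
qed

lemma double_sr_violation_lt_1:
  fixes e :: real assumes e: "0 \<le> e" "e < 4 * sqrt 2 / 7 - 5 / 7"
  shows "e < 1" "2 * sr_violation e < 1"
proof -
  have "sqrt 2 < 2" by (simp add: real_sqrt_less_iff[of 2 4, simplified])
  then show e1: "e < 1" using e by simp
  have "(7 * e + 5)^2 < (4 * sqrt 2)^2" using e by (intro power_strict_mono) simp_all
  then have "(7 * e + 5)^2 < 32" by (simp add: power_mult_distrib)
  then have "8 * e * (1 + e) < (1 - e)^2" by (simp add: power2_eq_square algebra_simps)
  then show "2 * sr_violation e < 1" using e1 by (simp add: sr_violation_def)
qed

theorem lemma4:
  fixes Nx Ny Nz Mx My Mz s :: nat
    and S :: "idx set" and b :: "idx \<Rightarrow> real"
    and gp :: "idx \<Rightarrow> real^3" and c :: "real^3" and r :: real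
    and \<omega> :: "idx \<Rightarrow> real"
    and U2 U5 :: "cvec set" and x2 x5 :: cvec and eps5 :: real
  defines "I \<equiv> Idx Nx Ny Nz"
    and "F \<equiv> dft Nx Ny Nz Mx My Mz"
    and "A1 \<equiv> setSYM Nx Ny Nz"
    and "A2 \<equiv> setSR (Idx Nx Ny Nz) s"
    and "A3 \<equiv> setSUPP (Idx Nx Ny Nz) \<omega>"
    and "A4 \<equiv> setLF (Idx Nx Ny Nz) (dft Nx Ny Nz Mx My Mz) (Idx Mx My Mz) gp (ball c r)"
    and "A5 \<equiv> setM (Idx Nx Ny Nz) (dft Nx Ny Nz Mx My Mz) S b"
    and "Lam2 \<equiv> proj_inv (Idx Nx Ny Nz) (setSR (Idx Nx Ny Nz) s) (setSR (Idx Nx Ny Nz) s \<inter> U2) \<inter> U2"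
    and "Lam5 \<equiv> proj_inv (Idx Nx Ny Nz) (setM (Idx Nx Ny Nz) (dft Nx Ny Nz Mx My Mz) S b)
                 (setM (Idx Nx Ny Nz) (dft Nx Ny Nz Mx My Mz) S b \<inter> U5) \<inter> U5"
  assumes pos: "0 < Nx" "0 < Ny" "0 < Nz"
    and over: "Nx \<le> Mx" "Ny \<le> My" "Nz \<le> Mz"
    and S_sub: "S \<subseteq> Idx Mx My Mz"
    and b_nonneg: "\<forall>k\<in>S. 0 \<le> b k"
    and \<omega>_binary: "\<forall>k. \<omega> k \<in> {0, 1}"
    and \<omega>_sym: "\<forall>i j l. (i, j, l) \<in> I \<longrightarrow>
          \<omega> (i, j, l) = \<omega> (Nx - i + 1, j, l) \<and>
          \<omega> (i, j, l) = \<omega> (i, Ny - j + 1, l) \<and>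
          \<omega> (i, j, l) = \<omega> (i, j, Nz - l + 1)"
    and s_pos: "0 < s"
    and U2: "open_V I U2" "x2 \<in> U2" "x2 \<in> A2"
    and P2: "\<forall>y\<in>Lam2. pw_almost_afne I (proj I A2) y U2 (1/2) 0"
    and U5: "open_V I U5" "x5 \<in> U5" "x5 \<in> A5"
    and SR5: "super_regular_dist I A5 Lam5 x5 eps5 U5"
  shows
    "(0 \<le> eps5 \<and> eps5 < 4 * sqrt 2 / 7 - 5 / 7 \<longrightarrow>
        (\<forall>y\<in>Vsp I. pw_almost_nonexp I (reflector I A1) y (Vsp I) 0) \<and>
        (\<forall>y\<in>Lam2. pw_almost_nonexp I (reflector I A2) y U2 0) \<and>
        (\<forall>y\<in>Vsp I. pw_almost_nonexp I (reflector I A3) y (Vsp I) 0) \<and>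
        (\<forall>y\<in>Vsp I. pw_almost_nonexp I (reflector I A4) y (Vsp I) 0) \<and>
        (\<forall>y\<in>Lam5. pw_almost_nonexp I (reflector I A5) y U5
                      (8 * eps5 * (1 + eps5) / (1 - eps5)^2)))
   \<and> (0 \<le> eps5 \<and> eps5 < 2 * sqrt 3 / 3 - 1 \<longrightarrow>
        (\<forall>y\<in>Vsp I. pw_almost_afne I (proj I A1) y (Vsp I) (1/2) 0) \<and>
        (\<forall>y\<in>Lam2. pw_almost_afne I (proj I A2) y U2 (1/2) 0) \<and>
        (\<forall>y\<in>Vsp I. pw_almost_afne I (proj I A3) y (Vsp I) (1/2) 0) \<and>
        (\<forall>y\<in>Vsp I. pw_almost_afne I (proj I A4) y (Vsp I) (1/2) 0) \<and>
        (\<forall>y\<in>Lam5. pw_almost_afne I (proj I A5) y U5 (1/2)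
                      (4 * eps5 * (1 + eps5) / (1 - eps5)^2)))"
proof -
  have A5_sub: "A5 \<subseteq> Vsp I" unfolding A5_def setM_def I_def by blast
  have Lam5_sub: "Lam5 \<subseteq> U5" unfolding Lam5_def by blast
  have "lincomb_closed A1" "lincomb_closed A3" "lincomb_closed A4"
    unfolding A1_def A3_def A4_def
    by (rule lincomb_closed_setSYM lincomb_closed_setSUPP lincomb_closed_setLF)+
  then have firm134: "\<And>y U. pw_almost_afne I (proj I A1) y U (1/2) 0"
    "\<And>y U. pw_almost_afne I (proj I A3) y U (1/2) 0"
    "\<And>y U. pw_almost_afne I (proj I A4) y U (1/2) 0"
    by (simp_all add: proj_lincomb_closed_firmly_nonexp)
  have refl_firm: "pw_almost_nonexp I (reflector I A) y U 0"
    if "pw_almost_afne I (proj I A) y U (1/2) 0" for A y U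
    using reflector_almost_nonexp_if_proj_almost_firmly_nonexp[OF that] by simp
  have firm5: "\<forall>y\<in>Lam5. pw_almost_afne I (proj I A5) y U5 (1/2) (sr_violation eps5)"
    if "0 \<le> eps5" "eps5 < 1" "sr_violation eps5 < 1"
    using super_regular_dist_proj_almost_firmly_nonexp[OF SR5 A5_sub] sr_violation_ge that Lam5_sub
    by blast
  have refl5: "\<forall>y\<in>Lam5. pw_almost_nonexp I (reflector I A5) y U5 (2 * sr_violation eps5)"
    if "0 \<le> eps5" "eps5 < 1" "2 * sr_violation eps5 < 1"
    using firm5 reflector_almost_nonexp_if_proj_almost_firmly_nonexp that by simp
  show ?thesis
    using firm5 refl5 sr_violation_lt_1 double_sr_violation_lt_1
    by (intro conjI impI) (simp_all add: firm134 refl_firm P2 sr_violation_def mult.assoc)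
qed

end
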